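(* Let $E$ be a finite-dimensional real inner product space and let $C(t)=\bigcap_{i=1}^k\{x\in E:(x,n_i)_0\le c_i(t)\}$, $t\ge0$, be nonempty and uniformly bounded, where $n_1,\dots,n_k\in E$, $k\ge\dim E$, and $c_i$ are globally Lipschitz continuous $T$-periodic functions. Assume that any $\dim E$ vectors of $\{n_i\}_{i=1}^k$ are linearly independent and that the cardinality of $J(t,x)=\{i\in\{1,\dots,k\}:(x,n_i)_0=c_i(t)\}$ does not exceed $\dim E$ for all $x\in C(t)$ and $t\in[0,T]$. Then the set $X(t)$ of $T$-periodic solutions of $-\dot x\in N^0_{C(t)}(x)$ contains at most one non-constant $T$-periodic solution.
   Context: $(\cdot,\cdot)_0$ is the inner product of $E$. $N^0_K(x)=\{\zeta\in E:(\zeta,c-x)_0\le0\ \forall c\in K\}$ if $x\in K$, $\emptyset$ otherwise. A solution is a Lipschitz function $x$ on $[0,\infty)$ with $x(t)\in C(t)$ satisfying the inclusion a.e. (existing and unique for each initial value). $T$-periodic solutions are those with $x(T)=x(0)$. *)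

theory Defs
  imports "HOL-Analysis.Analysis"
begin

definition normal_cone :: "'a::real_inner set \<Rightarrow> 'a \<Rightarrow> 'a set" where
  "normal_cone K x = (if x \<in> K then {\<zeta>. \<forall>c\<in>K. \<zeta> \<bullet> (c - x) \<le> 0} else {})"

definition poly_set :: "nat \<Rightarrow> (nat \<Rightarrow> 'a::real_inner) \<Rightarrow> (nat \<Rightarrow> real \<Rightarrow> real) \<Rightarrow> real \<Rightarrow> 'a set" where
  "poly_set k n c t = {x. \<forall>i\<in>{1..k}. x \<bullet> n i \<le> c i t}"

definition active_set :: "nat \<Rightarrow> (nat \<Rightarrow> 'a::real_inner) \<Rightarrow> (nat \<Rightarrow> real \<Rightarrow> real) \<Rightarrow> real \<Rightarrow> 'a \<Rightarrow> nat set" where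
  "active_set k n c t x = {i\<in>{1..k}. x \<bullet> n i = c i t}"

definition sweeping_solution :: "(real \<Rightarrow> 'a::euclidean_space set) \<Rightarrow> (real \<Rightarrow> 'a) \<Rightarrow> bool" where
  "sweeping_solution C x \<longleftrightarrow>
     (\<exists>L. L-lipschitz_on {0..} x) \<and>
     (\<forall>t\<ge>0. x t \<in> C t) \<and>
     (AE t in lebesgue. t \<ge> 0 \<longrightarrow>
        (\<exists>v. (x has_vector_derivative v) (at t) \<and> - v \<in> normal_cone (C t) (x t)))"

definition periodic_solution :: "real \<Rightarrow> (real \<Rightarrow> 'a::euclidean_space set) \<Rightarrow> (real \<Rightarrow> 'a) \<Rightarrow> bool" where
  "periodic_solution T C x \<longleftrightarrow> sweeping_solution C x \<and> x T = x 0"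

end

theory Submission
  imports Defs
begin

text \<open>Two solutions of a sweeping process never move apart, so two T-periodic solutions x, y
  stay at constant distance. Differentiating |x - y|^2 shows that each velocity is orthogonal to
  x - y; hence -x' and -y' are also normal at the midpoint of x and y, whose active constraints
  are those active at both points. Almost every time is a limit point of the times with the same
  common face, and there (x - y) \<bullet> n i is stationary for the common active i, which forces
  x' = y'. So x - y = w is constant. If w \<noteq> 0, the normals of every common face are
  orthogonal to w, hence independent. Along each direction u of their polar cone, t \<mapsto> x t \<bullet> u
  is monotone, hence constant by periodicity; as this polar cone spans E, x is constant.\<close>

lemma has_vector_derivative_inner:
  fixes f g :: "real \<Rightarrow> 'a::real_inner"
  assumes "(f has_vector_derivative f') (at t)" "(g has_vector_derivative g') (at t)"
  shows "((\<lambda>s. f s \<bullet> g s) has_real_derivative (f t \<bullet> g' + f' \<bullet> g t)) (at t)"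
proof -
  have "((\<lambda>s. f s \<bullet> g s) has_derivative (\<lambda>h. f t \<bullet> (h *\<^sub>R g') + (h *\<^sub>R f') \<bullet> g t)) (at t)"
    using has_derivative_inner[OF assms[unfolded has_vector_derivative_def]] by simp
  then show ?thesis
    unfolding has_real_derivative_iff_has_vector_derivative has_vector_derivative_def
    by (simp add: algebra_simps)
qed

lemma lipschitz_on_inner_left:
  fixes f :: "'a::metric_space \<Rightarrow> 'b::real_inner"
  assumes "L-lipschitz_on S f"
  shows "(L * norm u)-lipschitz_on S (\<lambda>s. f s \<bullet> u)"
proof (rule lipschitz_onI)
  fix s t assume "s \<in> S" "t \<in> S"
  have "dist (f s \<bullet> u) (f t \<bullet> u) = \<bar>(f s - f t) \<bullet> u\<bar>"
    by (simp add: dist_real_def inner_diff_left)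
  also have "\<dots> \<le> dist (f s) (f t) * norm u"
    by (simp add: dist_norm Cauchy_Schwarz_ineq2)
  also have "\<dots> \<le> L * dist s t * norm u"
    by (rule mult_right_mono[OF lipschitz_onD[OF assms \<open>s \<in> S\<close> \<open>t \<in> S\<close>]]) simp
  finally show "dist (f s \<bullet> u) (f t \<bullet> u) \<le> L * norm u * dist s t"
    by (simp add: ac_simps)
qed (use lipschitz_on_nonneg[OF assms] in simp)

lemma lipschitz_on_inner_self:
  fixes f :: "'a::metric_space \<Rightarrow> 'b::real_inner"
  assumes "L-lipschitz_on S f" "0 \<le> M" "\<And>s. s \<in> S \<Longrightarrow> norm (f s) \<le> M"
  shows "(2 * M * L)-lipschitz_on S (\<lambda>s. f s \<bullet> f s)"
proof (rule lipschitz_onI)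
  fix s t assume st: "s \<in> S" "t \<in> S"
  have "dist (f s \<bullet> f s) (f t \<bullet> f t) = \<bar>(f s - f t) \<bullet> (f s + f t)\<bar>"
    by (simp add: dist_real_def algebra_simps inner_commute)
  also have "\<dots> \<le> norm (f s - f t) * norm (f s + f t)"
    by (rule Cauchy_Schwarz_ineq2)
  also have "\<dots> \<le> (L * dist s t) * (2 * M)"
    using lipschitz_onD[OF assms(1) st] lipschitz_on_nonneg[OF assms(1)]
      norm_triangle_le[of "f s" "f t" "2 * M"] assms(3)[OF st(1)] assms(3)[OF st(2)]
    by (intro mult_mono) (auto simp: dist_norm)
  finally show "dist (f s \<bullet> f s) (f t \<bullet> f t) \<le> 2 * M * L * dist s t"
    by (simp add: ac_simps)
qed (use assms(2) lipschitz_on_nonneg[OF assms(1)] in simp)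

lemma negligible_isolated_points:
  fixes A :: "'a::euclidean_space set"
  shows "negligible {x \<in> A. \<not> x islimpt A}"
proof -
  let ?I = "{x \<in> A. \<not> x islimpt A}"
  obtain \<B> :: "'a set set" where \<B>: "countable \<B>" "\<And>C. C \<in> \<B> \<Longrightarrow> open C"
    "\<And>S. open S \<Longrightarrow> \<exists>U. U \<subseteq> \<B> \<and> S = \<Union>U"
    using univ_second_countable by blast
  have "\<exists>B\<in>\<B>. x \<in> B \<and> B \<inter> A \<subseteq> {x}" if "x \<in> ?I" for x
  proof -
    obtain T where "open T" "x \<in> T" "T \<inter> A \<subseteq> {x}"
      using \<open>x \<in> ?I\<close> unfolding islimpt_def by blast
    moreover obtain U where "U \<subseteq> \<B>" "T = \<Union>U"
      using \<B>(3)[OF \<open>open T\<close>] by blast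
    ultimately show ?thesis by blast
  qed
  then obtain f where f: "\<And>x. x \<in> ?I \<Longrightarrow> f x \<in> \<B> \<and> x \<in> f x \<and> f x \<inter> A \<subseteq> {x}"
    by metis
  have "inj_on f ?I"
    by (rule inj_onI) (use f in blast)
  then have "countable ?I"
    using f countable_subset[OF _ \<B>(1)] by (meson countable_image_inj_on image_subsetI)
  then have "negligible (\<Union>x\<in>?I. {x})"
    by (intro negligible_countable_Union) auto
  then show ?thesis by simp
qed

lemma DERIV_zero_at_limit_point_of_level_set:
  fixes h :: "real \<Rightarrow> real"
  assumes "(h has_real_derivative D) (at t)" "t islimpt A" "\<And>s. s \<in> A \<Longrightarrow> h s = h t"
  shows "D = 0"
proof -
  have "((\<lambda>s. (h s - h t) / (s - t)) \<longlongrightarrow> D) (at t within A)"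
    using has_field_derivative_at_within[OF assms(1)] unfolding has_field_derivative_iff .
  moreover have "\<forall>\<^sub>F s in at t within A. (h s - h t) / (s - t) = 0"
    using assms(3) by (auto simp: eventually_at_filter)
  ultimately have "((\<lambda>s. 0) \<longlongrightarrow> D) (at t within A)"
    by (rule Lim_transform_eventually)
  moreover have "at t within A \<noteq> bot"
    using assms(2) by (simp add: trivial_limit_within)
  ultimately show ?thesis
    using tendsto_unique tendsto_const by blast
qed

lemma continuous_on_last_crossing:
  fixes g :: "real \<Rightarrow> real"
  assumes "a \<le> b" and cont: "continuous_on {a..b} g" and "g a < v" "v < g b"
  obtains s where "s \<in> {a<..<b}" "g s = v" "\<And>r. r \<in> {s<..b} \<Longrightarrow> v < g r"
proof -
  define K where "K = {a..b} \<inter> g -` {..v}"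
  have "closed K"
    unfolding K_def by (rule continuous_closed_preimage[OF cont]) auto
  moreover have "a \<in> K" "bdd_above K"
    using assms by (auto simp: K_def less_imp_le)
  ultimately obtain s where s: "s \<in> K" and above: "\<And>r. r \<in> K \<Longrightarrow> r \<le> s"
    using closed_contains_Sup cSup_upper by blast
  then have "g s \<le> v" "a \<le> s" "s \<le> b"
    using \<open>a \<in> K\<close> by (auto simp: K_def)
  moreover have "continuous_on {s..b} g"
    using cont by (rule continuous_on_subset) (use \<open>a \<le> s\<close> in auto)
  ultimately obtain r where "s \<le> r" "r \<le> b" "g r = v"
    using IVT'[of g s v b] \<open>v < g b\<close> by auto
  then have "g s = v"
    using above[of r] \<open>a \<le> s\<close> by (auto simp: K_def)
  moreover have "v < g r" if "r \<in> {s<..b}" for r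
    using above[of r] that \<open>a \<le> s\<close> by (force simp: K_def)
  moreover have "s \<in> {a<..<b}"
    using \<open>g s = v\<close> \<open>a \<le> s\<close> \<open>s \<le> b\<close> assms(3,4) by (auto simp: less_le)
  ultimately show ?thesis
    using that by blast
qed

lemma lipschitz_ae_DERIV_neg_imp_le:
  fixes g :: "real \<Rightarrow> real"
  assumes "a \<le> b" and lip: "B-lipschitz_on {a..b} g" and "negligible N"
    and der: "\<And>t. t \<in> {a<..<b} \<Longrightarrow> t \<notin> N \<Longrightarrow> \<exists>D<0. (g has_real_derivative D) (at t)"
  shows "g b \<le> g a"
proof (rule ccontr)
  assume "\<not> g b \<le> g a"
  \<comment> \<open>Lipschitz maps preserve null sets, so some level between g a and g b is attained only
    outside N; at the last time g crosses that level it cannot be strictly decreasing.\<close>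
  have "negligible (g ` (N \<inter> {a..b}))"
  proof (rule negligible_locally_Lipschitz_image)
    fix t assume "t \<in> N \<inter> {a..b}"
    then show "\<exists>U B. open U \<and> t \<in> U \<and> (\<forall>s\<in>N \<inter> {a..b} \<inter> U. norm (g s - g t) \<le> B * norm (s - t))"
      using lipschitz_on_normD[OF lip] by (intro exI[of _ UNIV] exI[of _ B]) auto
  qed (use \<open>negligible N\<close> negligible_Int in auto)
  moreover have "\<not> negligible {g a<..<g b}"
    using open_not_negligible[of "{g a<..<g b}"] \<open>\<not> g b \<le> g a\<close> by simp
  ultimately obtain v where v: "g a < v" "v < g b" "v \<notin> g ` (N \<inter> {a..b})"
    by (metis greaterThanLessThan_iff negligible_subset subsetI)
  obtain s where s: "s \<in> {a<..<b}" "g s = v" and above: "\<And>r. r \<in> {s<..b} \<Longrightarrow> v < g r"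
    using continuous_on_last_crossing[OF \<open>a \<le> b\<close> lipschitz_on_continuous_on[OF lip] v(1,2)] by blast
  have "s \<notin> N"
    using imageI[of s "N \<inter> {a..b}" g] s v(3) by auto
  then obtain D where "D < 0" "(g has_real_derivative D) (at s)"
    using der s(1) by blast
  then obtain d where d: "d > 0" "\<And>h. 0 < h \<Longrightarrow> h < d \<Longrightarrow> g (s + h) < g s"
    using DERIV_neg_dec_right by blast
  define h where "h = min (b - s) (d / 2)"
  have "0 < h" "h < d" "s + h \<in> {s<..b}"
    using s(1) \<open>d > 0\<close> by (auto simp: h_def)
  then show False
    using above d(2) s(2) by fastforce
qed

lemma lipschitz_ae_DERIV_nonpos_imp_le:
  fixes f :: "real \<Rightarrow> real"
  assumes "a \<le> b" and lip: "B-lipschitz_on {a..b} f" and "negligible N"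
    and der: "\<And>t. t \<in> {a<..<b} \<Longrightarrow> t \<notin> N \<Longrightarrow> \<exists>D\<le>0. (f has_real_derivative D) (at t)"
  shows "f b \<le> f a"
proof (rule field_le_epsilon)
  fix e :: real assume "0 < e"
  define \<epsilon> where "\<epsilon> = e / (b - a + 1)"
  have "\<epsilon> > 0" using \<open>0 < e\<close> \<open>a \<le> b\<close> by (simp add: \<epsilon>_def)
  have "f b - \<epsilon> * b \<le> f a - \<epsilon> * a"
  proof (rule lipschitz_ae_DERIV_neg_imp_le[OF \<open>a \<le> b\<close> _ \<open>negligible N\<close>])
    show "(B + \<epsilon> * 1)-lipschitz_on {a..b} (\<lambda>t. f t - \<epsilon> * t)"
      using \<open>\<epsilon> > 0\<close> by (intro lipschitz_on_diff lip lipschitz_on_cmult_real_nonneg lipschitz_on_id) simp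
    show "\<exists>D<0. ((\<lambda>t. f t - \<epsilon> * t) has_real_derivative D) (at t)"
      if t: "t \<in> {a<..<b}" "t \<notin> N" for t
    proof -
      obtain D where "D \<le> 0" "(f has_real_derivative D) (at t)"
        using der[OF t] by blast
      then have "((\<lambda>t. f t - \<epsilon> * t) has_real_derivative D - \<epsilon>) (at t)"
        by (auto intro!: derivative_eq_intros)
      then show ?thesis
        using \<open>D \<le> 0\<close> \<open>\<epsilon> > 0\<close> by (intro exI[of _ "D - \<epsilon>"]) simp
    qed
  qed
  moreover have "\<epsilon> * (b - a) \<le> e"
    using \<open>0 < e\<close> \<open>a \<le> b\<close> by (simp add: \<epsilon>_def field_simps)
  ultimately show "f b \<le> f a + e"
    by (simp add: algebra_simps)
qed

lemma lipschitz_ae_vector_derivative_zero_imp_eq: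
  fixes z :: "real \<Rightarrow> 'a::real_inner"
  assumes "a \<le> b" and lip: "B-lipschitz_on {a..b} z" and "negligible N"
    and der: "\<And>t. t \<in> {a<..<b} \<Longrightarrow> t \<notin> N \<Longrightarrow> (z has_vector_derivative 0) (at t)"
  shows "z b = z a"
proof -
  define u where "u = z b - z a"
  have lip_u: "(B * norm u)-lipschitz_on {a..b} (\<lambda>t. z t \<bullet> u)"
    using lip by (rule lipschitz_on_inner_left)
  have der_u: "((\<lambda>t. z t \<bullet> u) has_real_derivative 0) (at t)" if "t \<in> {a<..<b}" "t \<notin> N" for t
    using has_vector_derivative_inner[OF der[OF that], of "\<lambda>_. u" 0] by simp
  have "z b \<bullet> u \<le> z a \<bullet> u"
    using lip_u der_u by (intro lipschitz_ae_DERIV_nonpos_imp_le[OF \<open>a \<le> b\<close> _ \<open>negligible N\<close>]) auto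
  moreover have "- (z b \<bullet> u) \<le> - (z a \<bullet> u)"
    using lip_u DERIV_minus[OF der_u]
    by (intro lipschitz_ae_DERIV_nonpos_imp_le[OF \<open>a \<le> b\<close> _ \<open>negligible N\<close>]) fastforce+
  ultimately have "u \<bullet> u = 0"
    by (simp add: u_def inner_diff_left)
  then show ?thesis
    by (simp add: u_def)
qed

lemma antimono_periodic_imp_const:
  fixes h :: "real \<Rightarrow> 'b::order"
  assumes "T > 0"
    and anti: "\<And>s t. 0 \<le> s \<Longrightarrow> s \<le> t \<Longrightarrow> h t \<le> h s"
    and per: "\<And>t. 0 \<le> t \<Longrightarrow> h (t + T) = h t"
    and "0 \<le> s" "0 \<le> t"
  shows "h s = h t"
proof -
  have per_nat: "h (t + real m * T) = h t" if "0 \<le> t" for t m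
  proof (induction m)
    case (Suc m)
    have "h (t + real (Suc m) * T) = h ((t + real m * T) + T)"
      by (simp add: algebra_simps)
    then show ?case
      using per[of "t + real m * T"] Suc \<open>T > 0\<close> \<open>0 \<le> t\<close> by simp
  qed simp
  have "h s \<le> h t" if "0 \<le> s" "0 \<le> t" for s t
  proof -
    obtain m :: nat where "t / T \<le> real m"
      using real_arch_simple by blast
    then have "t \<le> s + real m * T"
      using \<open>T > 0\<close> \<open>0 \<le> s\<close> by (simp add: field_simps)
    then show ?thesis
      using anti[of t "s + real m * T"] per_nat[OF \<open>0 \<le> s\<close>] \<open>0 \<le> t\<close> by simp
  qed
  then show ?thesis
    using assms(4,5) by (blast intro: order.antisym)
qed

lemma periodic_lipschitz_ae_DERIV_nonpos_imp_const:
  fixes f :: "real \<Rightarrow> real"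
  assumes "T > 0" and lip: "L-lipschitz_on {0..} f" and per: "\<And>t. 0 \<le> t \<Longrightarrow> f (t + T) = f t"
    and "negligible N" and der: "\<And>t. 0 < t \<Longrightarrow> t \<notin> N \<Longrightarrow> \<exists>D\<le>0. (f has_real_derivative D) (at t)"
    and "0 \<le> s" "0 \<le> t"
  shows "f s = f t"
proof (rule antimono_periodic_imp_const[of T f])
  fix a b :: real assume "0 \<le> a" "a \<le> b"
  then show "f b \<le> f a"
    using der lipschitz_on_subset[OF lip, of "{a..b}"]
    by (intro lipschitz_ae_DERIV_nonpos_imp_le[OF \<open>a \<le> b\<close> _ \<open>negligible N\<close>]) auto
qed (use assms in auto)

lemma finite_range_ae_islimpt_level_set:
  fixes S :: "real \<Rightarrow> 'b"
  assumes "finite (range S)"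
  obtains E where "negligible E" "\<And>t. t \<notin> E \<Longrightarrow> t islimpt {s. S s = S t}"
proof
  let ?E = "\<Union>J\<in>range S. {s \<in> {s. S s = J}. \<not> s islimpt {s. S s = J}}"
  show "negligible ?E"
    using assms
    by (intro negligible_Union) (auto intro: negligible_isolated_points[of "{s. S s = J}" for J, simplified])
  show "t islimpt {s. S s = S t}" if "t \<notin> ?E" for t
    using that by blast
qed

lemma periodic_lipschitz_monotone_direction_imp_orthogonal:
  fixes z :: "real \<Rightarrow> 'a::real_inner"
  assumes "T > 0" and lip: "L-lipschitz_on {0..} z" and per: "\<And>t. 0 \<le> t \<Longrightarrow> z (t + T) = z t"
    and "negligible N"
    and der: "\<And>t. 0 < t \<Longrightarrow> t \<notin> N \<Longrightarrow> (z has_vector_derivative z' t) (at t) \<and> 0 \<le> z' t \<bullet> u"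
    and "0 < s" "s \<notin> N"
  shows "z' s \<bullet> u = 0"
proof -
  have der_u: "((\<lambda>r. z r \<bullet> u) has_real_derivative z' r \<bullet> u) (at r)" if "0 < r" "r \<notin> N" for r
    using has_vector_derivative_inner[of z "z' r" r "\<lambda>_. u" 0] der[OF that] by simp
  have const: "- (z r \<bullet> u) = - (z s \<bullet> u)" if "0 \<le> r" for r
  proof (rule periodic_lipschitz_ae_DERIV_nonpos_imp_const[OF \<open>T > 0\<close> _ _ \<open>negligible N\<close> _ that])
    show "(L * norm u)-lipschitz_on {0..} (\<lambda>r. - (z r \<bullet> u))"
      using lipschitz_on_inner_left[OF lip] by simp
    show "- (z (r + T) \<bullet> u) = - (z r \<bullet> u)" if "0 \<le> r" for r
      using per[OF that] by simp
    show "\<exists>D\<le>0. ((\<lambda>r. - (z r \<bullet> u)) has_real_derivative D) (at r)" if "0 < r" "r \<notin> N" for r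
      using DERIV_minus[OF der_u[OF that]] der[OF that] by (intro exI[of _ "- (z' r \<bullet> u)"]) simp
  qed (use \<open>0 < s\<close> in simp)
  have "z s \<bullet> u = z r \<bullet> u" if "\<bar>s - r\<bar> < s" for r
    using const[of r] that by (simp add: abs_less_iff)
  then show ?thesis
    by (intro DERIV_local_const[OF der_u[OF \<open>0 < s\<close> \<open>s \<notin> N\<close>] \<open>0 < s\<close>]) simp
qed

definition sweeping_at :: "(real \<Rightarrow> 'a::real_inner set) \<Rightarrow> (real \<Rightarrow> 'a) \<Rightarrow> real \<Rightarrow> bool" where
  "sweeping_at C z t \<longleftrightarrow>
     (z has_vector_derivative vector_derivative z (at t)) (at t) \<and>
     - vector_derivative z (at t) \<in> normal_cone (C t) (z t)"

lemma normal_coneD: "\<zeta> \<in> normal_cone K x \<Longrightarrow> c \<in> K \<Longrightarrow> \<zeta> \<bullet> (c - x) \<le> 0"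
  by (auto simp: normal_cone_def split: if_splits)

lemma normal_cone_memD: "\<zeta> \<in> normal_cone K x \<Longrightarrow> x \<in> K"
  by (auto simp: normal_cone_def split: if_splits)

lemma sweeping_solution_ae:
  assumes "sweeping_solution C z"
  obtains N where "negligible N" "\<And>t. 0 \<le> t \<Longrightarrow> t \<notin> N \<Longrightarrow> sweeping_at C z t"
proof -
  have "AE t in lebesgue. 0 \<le> t \<longrightarrow>
      (\<exists>v. (z has_vector_derivative v) (at t) \<and> - v \<in> normal_cone (C t) (z t))"
    using assms unfolding sweeping_solution_def by blast
  then obtain N where "negligible N" "\<And>t. 0 \<le> t \<Longrightarrow> t \<notin> N \<Longrightarrow>
      \<exists>v. (z has_vector_derivative v) (at t) \<and> - v \<in> normal_cone (C t) (z t)"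
    unfolding eventually_ae_filter_negligible by blast
  then show ?thesis
    using that by (metis sweeping_at_def vector_derivative_at)
qed

lemma sweeping_at_mem: "sweeping_at C x t \<Longrightarrow> x t \<in> C t"
  unfolding sweeping_at_def by (blast dest: normal_cone_memD)

lemma sweeping_at_normal_ineq:
  assumes "sweeping_at C x t" "y \<in> C t"
  shows "0 \<le> vector_derivative x (at t) \<bullet> (y - x t)"
proof -
  have "- vector_derivative x (at t) \<bullet> (y - x t) \<le> 0"
    using assms unfolding sweeping_at_def by (blast intro: normal_coneD)
  then show ?thesis
    by simp
qed

lemma sweeping_at_sqdist_DERIV:
  assumes "sweeping_at C x t" "sweeping_at C y t"
  shows "((\<lambda>s. (x s - y s) \<bullet> (x s - y s)) has_real_derivative
      2 * ((x t - y t) \<bullet> (vector_derivative x (at t) - vector_derivative y (at t)))) (at t)"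
proof -
  define v where "v = vector_derivative x (at t) - vector_derivative y (at t)"
  have d: "((\<lambda>s. x s - y s) has_vector_derivative v) (at t)"
    using assms unfolding sweeping_at_def v_def by (intro has_vector_derivative_diff) auto
  have "(x t - y t) \<bullet> v + v \<bullet> (x t - y t) = 2 * ((x t - y t) \<bullet> v)"
    by (simp only: inner_commute[of v] mult_2)
  then show ?thesis
    using has_vector_derivative_inner[OF d d] unfolding v_def by metis
qed

lemma sweeping_solutions_dist_antimono:
  assumes z1: "sweeping_solution C z1" and z2: "sweeping_solution C z2"
    and "0 \<le> a" "a \<le> b"
  shows "dist (z1 b) (z2 b) \<le> dist (z1 a) (z2 a)"
proof -
  obtain N1 N2 where "negligible N1" "negligible N2"
    and good: "\<And>t. 0 \<le> t \<Longrightarrow> t \<notin> N1 \<union> N2 \<Longrightarrow> sweeping_at C z1 t \<and> sweeping_at C z2 t"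
    using sweeping_solution_ae[OF z1] sweeping_solution_ae[OF z2] by (metis UnI1 UnI2)
  obtain L1 L2 where "L1-lipschitz_on {0..} z1" "L2-lipschitz_on {0..} z2"
    using z1 z2 unfolding sweeping_solution_def by blast
  define d where "d = (\<lambda>t. z1 t - z2 t)"
  have lip: "(L1 + L2)-lipschitz_on {a..b} d"
    unfolding d_def using \<open>0 \<le> a\<close>
    by (intro lipschitz_on_diff lipschitz_on_subset[OF \<open>L1-lipschitz_on {0..} z1\<close>]
        lipschitz_on_subset[OF \<open>L2-lipschitz_on {0..} z2\<close>]) auto
  have "bounded (d ` {a..b})"
    using lip by (intro compact_imp_bounded compact_continuous_image lipschitz_on_continuous_on) auto
  then obtain M where "0 < M" "\<And>t. t \<in> {a..b} \<Longrightarrow> norm (d t) \<le> M"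
    by (auto simp: bounded_pos)
  then have "(2 * M * (L1 + L2))-lipschitz_on {a..b} (\<lambda>t. d t \<bullet> d t)"
    using lip by (intro lipschitz_on_inner_self) auto
  then have "d b \<bullet> d b \<le> d a \<bullet> d a"
  proof (rule lipschitz_ae_DERIV_nonpos_imp_le[OF \<open>a \<le> b\<close> _ negligible_Un[OF \<open>negligible N1\<close> \<open>negligible N2\<close>]])
    fix t assume "t \<in> {a<..<b}" "t \<notin> N1 \<union> N2"
    then have z: "sweeping_at C z1 t" "sweeping_at C z2 t"
      using good \<open>0 \<le> a\<close> by auto
    have "0 \<le> vector_derivative z1 (at t) \<bullet> (z2 t - z1 t)" "0 \<le> vector_derivative z2 (at t) \<bullet> (z1 t - z2 t)"
      using z by (auto intro: sweeping_at_normal_ineq sweeping_at_mem)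
    then have "2 * ((z1 t - z2 t) \<bullet> (vector_derivative z1 (at t) - vector_derivative z2 (at t))) \<le> 0"
      by (simp add: inner_diff_left inner_diff_right inner_commute)
    then show "\<exists>D\<le>0. ((\<lambda>s. d s \<bullet> d s) has_real_derivative D) (at t)"
      using sweeping_at_sqdist_DERIV[OF z] unfolding d_def by blast
  qed
  then show ?thesis
    by (simp add: dist_norm d_def norm_le)
qed

lemma sweeping_solution_shift:
  assumes z: "sweeping_solution C z" and "0 \<le> T" and CT: "\<And>t. 0 \<le> t \<Longrightarrow> C (t + T) = C t"
  shows "sweeping_solution C (\<lambda>t. z (t + T))"
proof -
  obtain L where L: "L-lipschitz_on {0..} z"
    using z unfolding sweeping_solution_def by blast
  have "(L * (1 + 0))-lipschitz_on {0..} (\<lambda>t. z (t + T))"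
    using \<open>0 \<le> T\<close>
    by (intro lipschitz_on_compose2[of _ _ "\<lambda>t. t + T"] lipschitz_on_add lipschitz_on_id
        lipschitz_on_constant lipschitz_on_subset[OF L]) auto
  moreover have "\<forall>t\<ge>0. z (t + T) \<in> C t"
    using z CT \<open>0 \<le> T\<close> unfolding sweeping_solution_def by (metis add_nonneg_nonneg)
  moreover obtain N where "negligible N" and good: "\<And>t. 0 \<le> t \<Longrightarrow> t \<notin> N \<Longrightarrow> sweeping_at C z t"
    using sweeping_solution_ae[OF z] by blast
  have "\<exists>v. ((\<lambda>s. z (s + T)) has_vector_derivative v) (at t) \<and> - v \<in> normal_cone (C t) (z (t + T))"
    if "0 \<le> t" "t \<notin> (+) (- T) ` N" for t
  proof -
    have "t + T \<notin> N"
      using that(2) by (metis add.commute add_uminus_conv_diff diff_add_cancel image_eqI)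
    then have "sweeping_at C z (t + T)"
      using good \<open>0 \<le> t\<close> \<open>0 \<le> T\<close> by simp
    moreover have "((\<lambda>s. s + T) has_vector_derivative 1) (at t)"
      by (auto intro!: derivative_eq_intros)
    ultimately show ?thesis
      using vector_diff_chain_at[of "\<lambda>s. s + T" 1 t z] CT[OF \<open>0 \<le> t\<close>]
      by (auto simp: sweeping_at_def o_def)
  qed
  then have "AE t in lebesgue. 0 \<le> t \<longrightarrow>
      (\<exists>v. ((\<lambda>s. z (s + T)) has_vector_derivative v) (at t) \<and> - v \<in> normal_cone (C t) (z (t + T)))"
    unfolding eventually_ae_filter_negligible
    using negligible_translation[OF \<open>negligible N\<close>, of "- T"] by blast
  ultimately show ?thesis
    unfolding sweeping_solution_def by auto
qed

lemma periodic_solution_shift: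
  assumes z: "periodic_solution T C z" and "0 \<le> T" and CT: "\<And>t. 0 \<le> t \<Longrightarrow> C (t + T) = C t"
    and "0 \<le> t"
  shows "z (t + T) = z t"
proof -
  have "sweeping_solution C z" "z T = z 0"
    using z unfolding periodic_solution_def by auto
  moreover have "sweeping_solution C (\<lambda>t. z (t + T))"
    using sweeping_solution_shift \<open>sweeping_solution C z\<close> \<open>0 \<le> T\<close> CT by blast
  ultimately show ?thesis
    using sweeping_solutions_dist_antimono[of C "\<lambda>t. z (t + T)" z 0 t] \<open>0 \<le> t\<close> by simp
qed

lemma periodic_solutions_dist_const:
  assumes "T > 0" and CT: "\<And>t. 0 \<le> t \<Longrightarrow> C (t + T) = C t"
    and x: "periodic_solution T C x" and y: "periodic_solution T C y"
    and "0 \<le> s" "0 \<le> t"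
  shows "dist (x s) (y s) = dist (x t) (y t)"
proof (rule antimono_periodic_imp_const[OF \<open>T > 0\<close> _ _ \<open>0 \<le> s\<close> \<open>0 \<le> t\<close>])
  show "dist (x t) (y t) \<le> dist (x s) (y s)" if "0 \<le> s" "s \<le> t" for s t
    using x y that by (intro sweeping_solutions_dist_antimono) (auto simp: periodic_solution_def)
  show "dist (x (t + T)) (y (t + T)) = dist (x t) (y t)" if "0 \<le> t" for t
    using periodic_solution_shift[OF x] periodic_solution_shift[OF y] \<open>T > 0\<close> CT that by simp
qed

lemma sweeping_at_velocity_orthogonal:
  assumes x: "sweeping_at C x t" and y: "sweeping_at C y t" and "0 < t"
    and dist: "\<And>s. 0 \<le> s \<Longrightarrow> dist (x s) (y s) = dist (x t) (y t)"
  shows "vector_derivative x (at t) \<bullet> (y t - x t) = 0"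
proof -
  have "(x t - y t) \<bullet> (x t - y t) = (x s - y s) \<bullet> (x s - y s)" if "\<bar>t - s\<bar> < t" for s
    using dist[of s] that by (simp add: dist_norm power2_norm_eq_inner[symmetric])
  then have "2 * ((x t - y t) \<bullet> (vector_derivative x (at t) - vector_derivative y (at t))) = 0"
    using DERIV_local_const[OF sweeping_at_sqdist_DERIV[OF x y] \<open>0 < t\<close>] by blast
  moreover have "0 \<le> vector_derivative x (at t) \<bullet> (y t - x t)" "0 \<le> vector_derivative y (at t) \<bullet> (x t - y t)"
    using x y by (auto intro: sweeping_at_normal_ineq sweeping_at_mem)
  ultimately show ?thesis
    by (simp add: inner_diff_left inner_diff_right inner_commute)
qed

lemma periodic_solutions_ae:
  assumes "T > 0" and CT: "\<And>t. 0 \<le> t \<Longrightarrow> C (t + T) = C t"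
    and x: "periodic_solution T C x" and y: "periodic_solution T C y"
  obtains N where "negligible N"
    "\<And>t. 0 < t \<Longrightarrow> t \<notin> N \<Longrightarrow> sweeping_at C x t \<and> sweeping_at C y t \<and>
       vector_derivative x (at t) \<bullet> (y t - x t) = 0 \<and> vector_derivative y (at t) \<bullet> (x t - y t) = 0"
proof -
  obtain Nx Ny where "negligible Nx" "negligible Ny"
    and "\<And>t. 0 \<le> t \<Longrightarrow> t \<notin> Nx \<Longrightarrow> sweeping_at C x t" "\<And>t. 0 \<le> t \<Longrightarrow> t \<notin> Ny \<Longrightarrow> sweeping_at C y t"
    using x y sweeping_solution_ae unfolding periodic_solution_def by metis
  moreover have "dist (x s) (y s) = dist (x t) (y t)" "dist (y s) (x s) = dist (y t) (x t)"
    if "0 \<le> s" "0 \<le> t" for s t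
    using periodic_solutions_dist_const[OF \<open>T > 0\<close> CT x y that] by (simp_all add: dist_commute)
  ultimately show ?thesis
    using that[of "Nx \<union> Ny"] sweeping_at_velocity_orthogonal by (metis negligible_Un UnCI less_imp_le)
qed

lemma poly_set_midpoint:
  assumes "x \<in> poly_set k n c t" "y \<in> poly_set k n c t"
  shows "midpoint x y \<in> poly_set k n c t"
  unfolding poly_set_def
proof (intro CollectI ballI)
  fix i assume "i \<in> {1..k}"
  then have "x \<bullet> n i \<le> c i t" "y \<bullet> n i \<le> c i t"
    using assms by (auto simp: poly_set_def)
  then show "midpoint x y \<bullet> n i \<le> c i t"
    by (simp add: midpoint_def inner_add_left)
qed

lemma active_set_midpoint:
  assumes "x \<in> poly_set k n c t" "y \<in> poly_set k n c t"
  shows "active_set k n c t (midpoint x y) = active_set k n c t x \<inter> active_set k n c t y"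
  using assms by (force simp: poly_set_def active_set_def midpoint_def inner_add_left)

lemma normal_cone_midpoint:
  assumes "\<zeta> \<in> normal_cone K x" "y \<in> K" "\<zeta> \<bullet> (y - x) = 0" "midpoint x y \<in> K"
  shows "\<zeta> \<in> normal_cone K (midpoint x y)"
  using assms normal_coneD[OF assms(1)]
  by (auto simp: normal_cone_def midpoint_def inner_diff_right inner_add_right)

lemma normal_cone_poly_set_polar:
  assumes \<zeta>: "\<zeta> \<in> normal_cone (poly_set k n c t) z"
    and v: "\<And>i. i \<in> active_set k n c t z \<Longrightarrow> v \<bullet> n i \<le> 0"
  shows "\<zeta> \<bullet> v \<le> 0"
proof -
  have z: "z \<in> poly_set k n c t"
    using \<zeta> by (rule normal_cone_memD)
  have "\<forall>\<^sub>F e in at_right 0. (z + e *\<^sub>R v) \<bullet> n i \<le> c i t" if "i \<in> {1..k}" for i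
  proof (cases "i \<in> active_set k n c t z")
    case True
    then show ?thesis
      using v[OF True] eventually_at_right_less[of 0]
      by (auto elim!: eventually_mono simp: active_set_def inner_add_left mult_nonneg_nonpos)
  next
    case False
    then have "z \<bullet> n i < c i t"
      using z that by (auto simp: poly_set_def active_set_def less_le)
    moreover have "((\<lambda>e. z \<bullet> n i + e * (v \<bullet> n i)) \<longlongrightarrow> z \<bullet> n i) (at_right 0)"
      by (auto intro!: tendsto_eq_intros)
    ultimately have "\<forall>\<^sub>F e in at_right 0. z \<bullet> n i + e * (v \<bullet> n i) < c i t"
      by (rule order_tendstoD(2)[rotated])
    then show ?thesis
      by (rule eventually_mono) (simp add: inner_add_left)
  qed
  then have "\<forall>\<^sub>F e in at_right 0. \<forall>i\<in>{1..k}. (z + e *\<^sub>R v) \<bullet> n i \<le> c i t"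
    by (intro eventually_ball_finite) auto
  then have "\<forall>\<^sub>F e in at_right 0. z + e *\<^sub>R v \<in> poly_set k n c t \<and> 0 < e"
    unfolding poly_set_def by (intro eventually_conj) (auto simp: eventually_at_right_less)
  then obtain e :: real where "z + e *\<^sub>R v \<in> poly_set k n c t" "0 < e"
    using eventually_happens trivial_limit_at_right_real by blast
  then have "e * (\<zeta> \<bullet> v) \<le> 0"
    using normal_coneD[OF \<zeta>] by fastforce
  then show ?thesis
    using \<open>0 < e\<close> by (simp add: mult_le_0_iff)
qed

lemma normal_cone_poly_set_common_face:
  assumes \<zeta>: "\<zeta> \<in> normal_cone (poly_set k n c t) p" and q: "q \<in> poly_set k n c t"
    and "\<zeta> \<bullet> (q - p) = 0"
    and u: "\<And>i. i \<in> active_set k n c t p \<inter> active_set k n c t q \<Longrightarrow> u \<bullet> n i \<le> 0"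
  shows "\<zeta> \<bullet> u \<le> 0"
proof -
  have p: "p \<in> poly_set k n c t"
    using \<zeta> by (rule normal_cone_memD)
  have "midpoint p q \<in> poly_set k n c t"
    using p q by (rule poly_set_midpoint)
  then have "\<zeta> \<in> normal_cone (poly_set k n c t) (midpoint p q)"
    using assms by (intro normal_cone_midpoint)
  then show ?thesis
    by (rule normal_cone_poly_set_polar) (use u active_set_midpoint[OF p q] in auto)
qed

lemma normal_cone_poly_set_common_face_eq:
  assumes v: "- v \<in> normal_cone (poly_set k n c t) p" "v \<bullet> (q - p) = 0"
    and w: "- w \<in> normal_cone (poly_set k n c t) q" "w \<bullet> (p - q) = 0"
    and vw: "\<And>i. i \<in> active_set k n c t p \<inter> active_set k n c t q \<Longrightarrow> (v - w) \<bullet> n i = 0"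
  shows "v = w"
proof -
  have p: "p \<in> poly_set k n c t" and q: "q \<in> poly_set k n c t"
    using v(1) w(1) by (auto dest: normal_cone_memD)
  have polar: "- v \<bullet> u \<le> 0 \<and> - w \<bullet> u \<le> 0"
    if "\<And>i. i \<in> active_set k n c t p \<inter> active_set k n c t q \<Longrightarrow> u \<bullet> n i \<le> 0" for u
    using normal_cone_poly_set_common_face[OF v(1) q, of u]
      normal_cone_poly_set_common_face[OF w(1) p, of u] that v(2) w(2)
    by (simp add: Int_commute)
  have "- v \<bullet> (v - w) \<le> 0 \<and> - w \<bullet> (v - w) \<le> 0"
    using vw by (intro polar) simp
  moreover have "- v \<bullet> (w - v) \<le> 0 \<and> - w \<bullet> (w - v) \<le> 0"
    using vw by (intro polar) (simp add: inner_diff_left)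
  ultimately have "(v - w) \<bullet> (v - w) = 0"
    by (simp add: inner_diff_left inner_diff_right)
  then show ?thesis
    by simp
qed

lemma independent_exists_inner_eq:
  fixes B :: "'a::euclidean_space set"
  assumes "independent B"
  obtains u where "\<And>b. b \<in> B \<Longrightarrow> u \<bullet> b = f b"
proof -
  obtain g where "linear g" "\<And>b. b \<in> B \<Longrightarrow> g b = f b"
    using linear_independent_extend[OF assms] by blast
  moreover have "(\<Sum>e\<in>Basis. g e *\<^sub>R e) \<bullet> b = g b" for b
  proof -
    have "(\<Sum>e\<in>Basis. g e *\<^sub>R e) \<bullet> b = (\<Sum>e\<in>Basis. g e * (e \<bullet> b))"
      by (simp add: inner_sum_left)
    also have "\<dots> = (\<Sum>e\<in>Basis. (b \<bullet> e) * g e)"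
      by (simp add: inner_commute mult.commute)
    also have "\<dots> = g (\<Sum>e\<in>Basis. (b \<bullet> e) *\<^sub>R e)"
      using \<open>linear g\<close> by (simp add: linear_sum linear_scale)
    also have "\<dots> = g b"
      by (simp add: euclidean_representation)
    finally show ?thesis .
  qed
  ultimately show ?thesis
    using that by metis
qed

lemma independent_orthogonal_polar_imp_zero:
  fixes v :: "'a::euclidean_space"
  assumes "independent B" and orth: "\<And>u. (\<forall>b\<in>B. u \<bullet> b \<le> 0) \<Longrightarrow> v \<bullet> u = 0"
  shows "v = 0"
proof -
  \<comment> \<open>u0 is an interior point of the polar cone, so v + r u0 lies in it for large r.\<close>
  obtain u0 where u0: "\<And>b. b \<in> B \<Longrightarrow> u0 \<bullet> b = -1"
    using independent_exists_inner_eq[OF assms(1), of "\<lambda>_. -1"] by blast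
  define r where "r = (\<Sum>b\<in>B. \<bar>v \<bullet> b\<bar>)"
  have le: "v \<bullet> b \<le> r" if "b \<in> B" for b
    using that finiteI_independent[OF assms(1)] unfolding r_def
    by (intro order_trans[OF abs_ge_self, of "v \<bullet> b"] member_le_sum) auto
  have "v \<bullet> (v + r *\<^sub>R u0) = 0"
    using u0 le by (intro orth) (auto simp: inner_add_left)
  moreover have "v \<bullet> (r *\<^sub>R u0) = 0"
    using u0 by (intro orth) (simp add: r_def sum_nonneg)
  ultimately have "v \<bullet> v = 0"
    unfolding inner_add_right by linarith
  then show ?thesis
    by (simp only: inner_eq_zero_iff)
qed

lemma independent_normals_orthogonal:
  fixes n :: "nat \<Rightarrow> 'a::euclidean_space"
  assumes "DIM('a) \<le> k"
    and indep: "\<forall>I\<subseteq>{1..k}. card I = DIM('a) \<longrightarrow> inj_on n I \<and> independent (n ` I)"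
    and "w \<noteq> 0"
  shows "independent (n ` {i \<in> {1..k}. w \<bullet> n i = 0})"
proof -
  define I where "I = {i \<in> {1..k}. w \<bullet> n i = 0}"
  have I: "I \<subseteq> {1..k}" "finite I"
    by (auto simp: I_def)
  have "card I < DIM('a)"
  proof (rule ccontr)
    assume "\<not> card I < DIM('a)"
    then obtain J where J: "J \<subseteq> I" "card J = DIM('a)"
      using obtain_subset_with_card_n[of "DIM('a)" I] by (metis not_less)
    then have "inj_on n J" "independent (n ` J)"
      using indep[rule_format, of J] I by auto
    moreover have "card (n ` J) = DIM('a)"
      using J \<open>inj_on n J\<close> by (simp add: card_image)
    ultimately have "UNIV \<subseteq> span (n ` J)"
      by (intro card_ge_dim_independent) (simp_all add: dim_UNIV)
    then have "orthogonal w w"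
      using J by (intro orthogonal_to_span[of w "n ` J"]) (auto simp: I_def orthogonal_def)
    then show False
      using \<open>w \<noteq> 0\<close> by (simp add: orthogonal_def)
  qed
  have "DIM('a) - card I \<le> card ({1..k} - I)"
    using I \<open>DIM('a) \<le> k\<close> by (simp add: card_Diff_subset diff_le_mono)
  then obtain J where J: "J \<subseteq> {1..k} - I" "card J = DIM('a) - card I" "finite J"
    by (rule obtain_subset_with_card_n)
  then have "card (I \<union> J) = DIM('a)"
    using \<open>card I < DIM('a)\<close> I by (subst card_Un_disjoint) auto
  then have "independent (n ` (I \<union> J))"
    using indep[rule_format, of "I \<union> J"] J I by auto
  then show ?thesis
    unfolding I_def[symmetric] by (rule independent_mono) auto
qed

lemma poly_set_periodic:
  assumes "\<forall>i\<in>{1..k}. \<forall>t\<ge>0. c i (t + T) = c i t" "0 \<le> t"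
  shows "poly_set k n c (t + T) = poly_set k n c t"
  using assms by (simp add: poly_set_def)

lemma sweeping_at_poly_set_velocities_eq:
  assumes x: "sweeping_at (poly_set k n c) x t" "vector_derivative x (at t) \<bullet> (y t - x t) = 0"
    and y: "sweeping_at (poly_set k n c) y t" "vector_derivative y (at t) \<bullet> (x t - y t) = 0"
    and lim: "t islimpt {s. active_set k n c s (x s) \<inter> active_set k n c s (y s) =
                           active_set k n c t (x t) \<inter> active_set k n c t (y t)}"
  shows "vector_derivative x (at t) = vector_derivative y (at t)"
proof -
  define v where "v = vector_derivative x (at t)"
  define w where "w = vector_derivative y (at t)"
  \<comment> \<open>(x - y) \<bullet> n i vanishes on the whole level set of the common face, which accumulates at t.\<close>
  have "(v - w) \<bullet> n i = 0" if i: "i \<in> active_set k n c t (x t) \<inter> active_set k n c t (y t)" for i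
  proof (rule DERIV_zero_at_limit_point_of_level_set[OF _ lim])
    have "((\<lambda>s. x s - y s) has_vector_derivative v - w) (at t)"
      using x y unfolding v_def w_def sweeping_at_def by (intro has_vector_derivative_diff) auto
    then show "((\<lambda>s. (x s - y s) \<bullet> n i) has_real_derivative (v - w) \<bullet> n i) (at t)"
      using has_vector_derivative_inner[of _ "v - w" t "\<lambda>_. n i" 0] by simp
    fix s assume "s \<in> {s. active_set k n c s (x s) \<inter> active_set k n c s (y s) =
                           active_set k n c t (x t) \<inter> active_set k n c t (y t)}"
    then have "i \<in> active_set k n c s (x s) \<inter> active_set k n c s (y s)"
      using i by simp
    then show "(x s - y s) \<bullet> n i = (x t - y t) \<bullet> n i"
      using i by (simp add: active_set_def inner_diff_left)
  qed
  then show ?thesis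
    using x y unfolding v_def[symmetric] w_def[symmetric] sweeping_at_def
    by (intro normal_cone_poly_set_common_face_eq[of v k n c t "x t" "y t" w]) auto
qed

lemma periodic_poly_solutions_velocities_eq_ae:
  fixes n :: "nat \<Rightarrow> 'a::euclidean_space"
  assumes "T > 0" and c_per: "\<forall>i\<in>{1..k}. \<forall>t\<ge>0. c i (t + T) = c i t"
    and x: "periodic_solution T (poly_set k n c) x" and y: "periodic_solution T (poly_set k n c) y"
  obtains N where "negligible N"
    "\<And>t. 0 < t \<Longrightarrow> t \<notin> N \<Longrightarrow> sweeping_at (poly_set k n c) x t \<and> sweeping_at (poly_set k n c) y t \<and>
       vector_derivative x (at t) = vector_derivative y (at t)"
proof -
  obtain N where "negligible N" and good: "\<And>t. 0 < t \<Longrightarrow> t \<notin> N \<Longrightarrow>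
      sweeping_at (poly_set k n c) x t \<and> sweeping_at (poly_set k n c) y t \<and>
      vector_derivative x (at t) \<bullet> (y t - x t) = 0 \<and> vector_derivative y (at t) \<bullet> (x t - y t) = 0"
    using periodic_solutions_ae[OF \<open>T > 0\<close> poly_set_periodic[OF c_per] x y] by blast
  define S where "S s = active_set k n c s (x s) \<inter> active_set k n c s (y s)" for s
  have "range S \<subseteq> Pow {1..k}"
    by (auto simp: S_def active_set_def)
  then obtain E where "negligible E" and lim: "\<And>t. t \<notin> E \<Longrightarrow> t islimpt {s. S s = S t}"
    using finite_range_ae_islimpt_level_set[of S] finite_subset by blast
  show ?thesis
  proof (rule that[of "N \<union> E"])
    show "negligible (N \<union> E)"
      using \<open>negligible N\<close> \<open>negligible E\<close> by simp
    fix t assume "0 < t" "t \<notin> N \<union> E"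
    then show "sweeping_at (poly_set k n c) x t \<and> sweeping_at (poly_set k n c) y t \<and>
       vector_derivative x (at t) = vector_derivative y (at t)"
      using good[of t] lim[of t] sweeping_at_poly_set_velocities_eq[of k n c x t y] by (auto simp: S_def)
  qed
qed

lemma periodic_poly_solutions_diff_const:
  fixes n :: "nat \<Rightarrow> 'a::euclidean_space"
  assumes "T > 0" and c_per: "\<forall>i\<in>{1..k}. \<forall>t\<ge>0. c i (t + T) = c i t"
    and x: "periodic_solution T (poly_set k n c) x" and y: "periodic_solution T (poly_set k n c) y"
    and "0 \<le> t"
  shows "x t - y t = x 0 - y 0"
proof -
  obtain N where "negligible N" and good: "\<And>s. 0 < s \<Longrightarrow> s \<notin> N \<Longrightarrow>
      sweeping_at (poly_set k n c) x s \<and> sweeping_at (poly_set k n c) y s \<and>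
      vector_derivative x (at s) = vector_derivative y (at s)"
    using periodic_poly_solutions_velocities_eq_ae[OF \<open>T > 0\<close> c_per x y] by blast
  obtain Lx Ly where "Lx-lipschitz_on {0..} x" "Ly-lipschitz_on {0..} y"
    using x y unfolding periodic_solution_def sweeping_solution_def by blast
  then have "(Lx + Ly)-lipschitz_on {0..t} (\<lambda>s. x s - y s)"
    by (intro lipschitz_on_diff) (auto intro: lipschitz_on_subset)
  then show ?thesis
  proof (rule lipschitz_ae_vector_derivative_zero_imp_eq[OF \<open>0 \<le> t\<close> _ \<open>negligible N\<close>])
    fix s assume "s \<in> {0<..<t}" "s \<notin> N"
    then have "sweeping_at (poly_set k n c) x s" "sweeping_at (poly_set k n c) y s"
      "vector_derivative x (at s) = vector_derivative y (at s)"
      using good by auto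
    then show "((\<lambda>s. x s - y s) has_vector_derivative 0) (at s)"
      unfolding sweeping_at_def using has_vector_derivative_diff by fastforce
  qed
qed

lemma periodic_poly_solution_const:
  fixes n :: "nat \<Rightarrow> 'a::euclidean_space"
  assumes "T > 0" and "DIM('a) \<le> k" and c_per: "\<forall>i\<in>{1..k}. \<forall>t\<ge>0. c i (t + T) = c i t"
    and indep: "\<forall>I\<subseteq>{1..k}. card I = DIM('a) \<longrightarrow> inj_on n I \<and> independent (n ` I)"
    and x: "periodic_solution T (poly_set k n c) x" and y: "periodic_solution T (poly_set k n c) y"
    and diff: "\<And>t. 0 \<le> t \<Longrightarrow> x t - y t = w" and "w \<noteq> 0" and "0 \<le> t"
  shows "x t = x 0"
proof -
  have CT: "\<And>t. 0 \<le> t \<Longrightarrow> poly_set k n c (t + T) = poly_set k n c t"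
    using poly_set_periodic[OF c_per] .
  obtain N where "negligible N" and good: "\<And>s. 0 < s \<Longrightarrow> s \<notin> N \<Longrightarrow>
      sweeping_at (poly_set k n c) x s \<and> sweeping_at (poly_set k n c) y s \<and>
      vector_derivative x (at s) \<bullet> (y s - x s) = 0 \<and> vector_derivative y (at s) \<bullet> (x s - y s) = 0"
    using periodic_solutions_ae[OF \<open>T > 0\<close> CT x y] by blast
  obtain L where lip: "L-lipschitz_on {0..} x"
    using x unfolding periodic_solution_def sweeping_solution_def by blast
  define I where "I = {i \<in> {1..k}. w \<bullet> n i = 0}"
  have "independent (n ` I)"
    unfolding I_def using \<open>DIM('a) \<le> k\<close> indep \<open>w \<noteq> 0\<close> by (rule independent_normals_orthogonal)
  have polar: "0 \<le> vector_derivative x (at r) \<bullet> u"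
    if "0 < r" "r \<notin> N" and u: "\<forall>b\<in>n ` I. u \<bullet> b \<le> 0" for r u
  proof -
    have "- vector_derivative x (at r) \<bullet> u \<le> 0"
    proof (rule normal_cone_poly_set_common_face)
      show "- vector_derivative x (at r) \<in> normal_cone (poly_set k n c r) (x r)"
        "- vector_derivative x (at r) \<bullet> (y r - x r) = 0" "y r \<in> poly_set k n c r"
        using good[OF that(1,2)] by (auto simp: sweeping_at_def intro: sweeping_at_mem)
      show "u \<bullet> n i \<le> 0" if "i \<in> active_set k n c r (x r) \<inter> active_set k n c r (y r)" for i
        using that u diff[of r] \<open>0 < r\<close> by (auto simp: I_def active_set_def inner_diff_left)
    qed
    then show ?thesis
      by simp
  qed
  have "vector_derivative x (at s) = 0" if "0 < s" "s \<notin> N" for s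
  proof (rule independent_orthogonal_polar_imp_zero[OF \<open>independent (n ` I)\<close>])
    fix u assume "\<forall>b\<in>n ` I. u \<bullet> b \<le> 0"
    then show "vector_derivative x (at s) \<bullet> u = 0"
      using good polar periodic_solution_shift[OF x less_imp_le[OF \<open>T > 0\<close>] CT] that
      by (intro periodic_lipschitz_monotone_direction_imp_orthogonal[OF \<open>T > 0\<close> lip _ \<open>negligible N\<close>])
        (auto simp: sweeping_at_def)
  qed
  then show ?thesis
    using lipschitz_on_subset[OF lip, of "{0..t}"] good \<open>0 \<le> t\<close>
    by (intro lipschitz_ae_vector_derivative_zero_imp_eq[OF \<open>0 \<le> t\<close> _ \<open>negligible N\<close>])
      (auto simp: sweeping_at_def)
qed

theorem theorem6:
  fixes n :: "nat \<Rightarrow> 'a::euclidean_space"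
    and c :: "nat \<Rightarrow> real \<Rightarrow> real"
    and k :: nat and T :: real
  assumes T_pos: "T > 0"
    and k_ge: "k \<ge> DIM('a)"
    and c_lip: "\<forall>i\<in>{1..k}. \<exists>L. L-lipschitz_on {0..} (c i)"
    and c_per: "\<forall>i\<in>{1..k}. \<forall>t\<ge>0. c i (t + T) = c i t"
    and nonempty: "\<forall>t\<ge>0. poly_set k n c t \<noteq> {}"
    and bounded: "\<exists>R. \<forall>t\<ge>0. poly_set k n c t \<subseteq> cball 0 R"
    and indep: "\<forall>I\<subseteq>{1..k}. card I = DIM('a) \<longrightarrow> inj_on n I \<and> independent (n ` I)"
    and active: "\<forall>t\<in>{0..T}. \<forall>x\<in>poly_set k n c t. card (active_set k n c t x) \<le> DIM('a)"
    and x_sol: "periodic_solution T (poly_set k n c) x"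
    and y_sol: "periodic_solution T (poly_set k n c) y"
    and x_nc: "\<exists>s\<ge>0. \<exists>t\<ge>0. x s \<noteq> x t"
    and y_nc: "\<exists>s\<ge>0. \<exists>t\<ge>0. y s \<noteq> y t"
  shows "\<forall>t\<ge>0. x t = y t"
proof (rule ccontr)
  assume "\<not> (\<forall>t\<ge>0. x t = y t)"
  then obtain t0 where "0 \<le> t0" "x t0 \<noteq> y t0"
    by blast
  have diff: "x t - y t = x 0 - y 0" if "0 \<le> t" for t
    using periodic_poly_solutions_diff_const[OF T_pos c_per x_sol y_sol that] .
  have "x 0 - y 0 \<noteq> 0"
    using diff[OF \<open>0 \<le> t0\<close>] \<open>x t0 \<noteq> y t0\<close> by (metis right_minus_eq)
  then have "x t = x 0" if "0 \<le> t" for t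
    using periodic_poly_solution_const[OF T_pos k_ge c_per indep x_sol y_sol diff _ that] by blast
  then show False
    using x_nc by metis
qed

end
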